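(* Let $W$ be the affine Weyl group of type $A_2^{(1)}$ and $N\in\mathbb{N}$. Let $w\in W^0$ with $\mathcal{L}_{\Lambda_0}(w)=N$. Then (1) $\mathcal{O}_N(w)=\bigsqcup_{i=0}^{2}\widehat{O}_N(\sigma_i w)$; (2) $\mathcal{U}(12N+4)=\bigsqcup_{v\in\widehat{\mathcal{B}}(N)}\widehat{O}_N(v)$.
   Context: Affine Kac–Moody setting of type $A_2^{(1)}$: $\mathfrak{h}^*$ contains simple roots $\alpha_0,\alpha_1,\alpha_2$, null root $\delta=\alpha_0+\alpha_1+\alpha_2$, the affine fundamental weight $\Lambda_0$, and $\rho^\vee\in\mathfrak h$ satisfies $\langle\alpha_i,\rho^\vee\rangle=1$ for all $i$; $c=\alpha_0^\vee+\alpha_1^\vee+\alpha_2^\vee$ is the canonical central element. The finite part $V_0=\mathbb{R}\alpha_1\oplus\mathbb{R}\alpha_2$ is identified with $\{x\in\mathbb{R}^3\mid x_1+x_2+x_3=0\}$ via $\alpha_1=\varepsilon_1-\varepsilon_2$, $\alpha_2=\varepsilon_2-\varepsilon_3$, with the standard dot product $(\cdot|\cdot)$ (extended to the standard invariant form on $\mathfrak h^*$). For $x\in V_0$, $t_x\in GL(\mathfrak h^* )$ is $t_x(v)=v+\langle v,c\rangle x-((v|x)+\frac12|x|^2\langle v,c\rangle)\delta$. $W_0=\langle s_1,s_2\rangle\cong S_3$ (permuting coordinates), $M=V_0\cap\mathbb{Z}^3$, $W=\langle s_0,s_1,s_2\rangle=T(M)\rtimes W_0$, and every $w\in W$ is uniquely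 $w=t_q\overline w$ with $q\in M$, $\overline w\in W_0$. $W^0=\{w\in W\mid \ell(ws_k)>\ell(w),\ k=1,2\}$ ($\ell$ = Coxeter length). Fundamental weights $\omega_1=(2/3,-1/3,-1/3)$, $\omega_2=(1/3,1/3,-2/3)$, $\omega_0=0$. $\sigma_0=e$, $\sigma_1=t_{\omega_1}s_1s_2$, $\sigma_2=t_{\omega_2}s_2s_1$ in the extended affine Weyl group $\widehat W=T(L)\rtimes W_0$, $L=\mathbb{Z}\omega_1+\mathbb{Z}\omega_2$; $\Sigma=\{\sigma_0,\sigma_1,\sigma_2\}$. For $g\in GL(\mathfrak h^* )$, the atomic length is $\mathcal{L}_{\Lambda_0}(g)=\langle\Lambda_0-g\Lambda_0,\rho^\vee\rangle$. $\widehat{\mathcal{B}}(N)=\{v\in\Sigma W^0\mid \mathcal{L}_{\Lambda_0}(v)=N\}$ where $\Sigma W^0=\{\sigma w\mid\sigma\in\Sigma, w\in W^0\}$. Let $M_0=\mathrm{id}$, $M_1(q_1,q_2,q_3)=(q_3,q_1,q_2)$, $M_2(q_1,q_2,q_3)=(q_2,q_3,q_1)$ (the matrices of $e$, $s_1s_2$, $s_2s_1$). Let $p:\mathbb{R}^3\to\mathbb{R}^2$, $p(x,y,z)=(3x+6y-1,3x-1)$, and $R=\frac12\begin{pmatrix}1&-3\\1&1\end{pmatrix}$. $\mathcal{U}(k)=\{(x,y)\in\mathbb{Z}^2\mid x^2+3y^2=k\}$. For $w=t_q\overline w\in W^0$ with $\mathcal{L}_{\Lambda_0}(w)=N$: $\mathcal{O}_N(w)=\{R^kp(q)\mid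 k=1,\dots,6\}$, and for $i\in\{0,1,2\}$, $\widehat{O}_N(\sigma_iw)=\{p(\omega_i+M_i(q)),\,-p(\omega_i+M_i(q))\}$. *)

theory Defs
  imports "HOL-Analysis.Analysis"
begin

type_synonym vec3 = "real \<times> real \<times> real"

text \<open>An element of h* is encoded by its coordinates (a1,a2,d,l) with respect to the
  basis alpha_1, alpha_2, delta, Lambda_0, i.e. it is a1 alpha_1 + a2 alpha_2 + d delta + l Lambda_0.\<close>
type_synonym hs = "real \<times> real \<times> real \<times> real"

definition al1 :: hs where "al1 = (1, 0, 0, 0)"
definition al2 :: hs where "al2 = (0, 1, 0, 0)"
definition dlt :: hs where "dlt = (0, 0, 1, 0)"
definition Lam0 :: hs where "Lam0 = (0, 0, 0, 1)"
definition al0 :: hs where "al0 = dlt - al1 - al2"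

text \<open>Finite part in V_0 (as a vector of R^3 with coordinate sum 0), delta- and Lambda_0-coefficient.\<close>
definition fin :: "hs \<Rightarrow> vec3" where
  "fin v = (case v of (a1, a2, d, l) \<Rightarrow> (a1, a2 - a1, - a2))"
definition dcoef :: "hs \<Rightarrow> real" where
  "dcoef v = (case v of (a1, a2, d, l) \<Rightarrow> d)"
definition lcoef :: "hs \<Rightarrow> real" where
  "lcoef v = (case v of (a1, a2, d, l) \<Rightarrow> l)"

text \<open>Embedding of V_0 = {x in R^3 | x1+x2+x3 = 0} into h* (x = x1 alpha_1 - x3 alpha_2).\<close>
definition emb :: "vec3 \<Rightarrow> hs" where
  "emb x = (case x of (x1, x2, x3) \<Rightarrow> (x1, - x3, 0, 0))"

definition dot3 :: "vec3 \<Rightarrow> vec3 \<Rightarrow> real" where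
  "dot3 x y = (case x of (x1, x2, x3) \<Rightarrow> case y of (y1, y2, y3) \<Rightarrow> x1*y1 + x2*y2 + x3*y3)"

text \<open>Standard invariant form: (Lambda_0|Lambda_0) = 0, (Lambda_0|delta) = 1, (delta|delta) = 0,
  V_0 orthogonal to delta and Lambda_0, dot product on V_0.\<close>
definition ip :: "hs \<Rightarrow> hs \<Rightarrow> real" where
  "ip v u = dot3 (fin v) (fin u) + dcoef v * lcoef u + lcoef v * dcoef u"

text \<open>Pairing with c (= (v|delta)) and with rho^vee
  (normalised by <Lambda_0, rho^vee> = 0; <alpha_i, rho^vee> = 1, hence <delta, rho^vee> = 3).\<close>
definition pair_c :: "hs \<Rightarrow> real" where
  "pair_c v = lcoef v"
definition pair_rho :: "hs \<Rightarrow> real" where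
  "pair_rho v = (case v of (a1, a2, d, l) \<Rightarrow> a1 + a2 + 3 * d)"

text \<open>Simple reflections s_i(v) = v - <v, alpha_i^vee> alpha_i (simply laced).\<close>
definition refl :: "hs \<Rightarrow> hs \<Rightarrow> hs" where
  "refl a v = v - ip v a *\<^sub>R a"

definition sref :: "nat \<Rightarrow> hs \<Rightarrow> hs" where
  "sref i = (if i = 0 then refl al0 else if i = 1 then refl al1 else refl al2)"

definition tr :: "vec3 \<Rightarrow> hs \<Rightarrow> hs" where
  "tr x v = v + pair_c v *\<^sub>R emb x - (dot3 (fin v) x + 1/2 * dot3 x x * pair_c v) *\<^sub>R dlt"

inductive_set gen :: "(hs \<Rightarrow> hs) set \<Rightarrow> (hs \<Rightarrow> hs) set" for S where
  gen_id: "id \<in> gen S"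
| gen_step: "s \<in> S \<Longrightarrow> g \<in> gen S \<Longrightarrow> s \<circ> g \<in> gen S"

definition Waff :: "(hs \<Rightarrow> hs) set" where
  "Waff = gen (sref ` {0, 1, 2})"

definition Wfin :: "(hs \<Rightarrow> hs) set" where
  "Wfin = gen {sref 1, sref 2}"

definition word :: "nat list \<Rightarrow> hs \<Rightarrow> hs" where
  "word ws = foldr (\<lambda>i g. sref i \<circ> g) ws id"

definition clen :: "(hs \<Rightarrow> hs) \<Rightarrow> nat" where
  "clen w = (LEAST n. \<exists>ws. set ws \<subseteq> {0, 1, 2} \<and> length ws = n \<and> word ws = w)"

definition Wup0 :: "(hs \<Rightarrow> hs) set" where
  "Wup0 = {w \<in> Waff. clen (w \<circ> sref 1) > clen w \<and> clen (w \<circ> sref 2) > clen w}"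

definition Mlat :: "vec3 set" where
  "Mlat = {(x1, x2, x3). x1 \<in> \<int> \<and> x2 \<in> \<int> \<and> x3 \<in> \<int> \<and> x1 + x2 + x3 = 0}"

definition omega :: "nat \<Rightarrow> vec3" where
  "omega i = (if i = 1 then (2/3, -1/3, -1/3) else if i = 2 then (1/3, 1/3, -2/3) else (0, 0, 0))"

definition sigmaA :: "nat \<Rightarrow> hs \<Rightarrow> hs" where
  "sigmaA i = (if i = 1 then tr (omega 1) \<circ> sref 1 \<circ> sref 2
              else if i = 2 then tr (omega 2) \<circ> sref 2 \<circ> sref 1 else id)"

definition atl :: "(hs \<Rightarrow> hs) \<Rightarrow> real" where
  "atl g = pair_rho (Lam0 - g Lam0)"

definition SigW0 :: "(hs \<Rightarrow> hs) set" where
  "SigW0 = {sigmaA i \<circ> w | i w. i < 3 \<and> w \<in> Wup0}"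

definition Bhat :: "nat \<Rightarrow> (hs \<Rightarrow> hs) set" where
  "Bhat N = {v \<in> SigW0. atl v = real N}"

definition Mrot :: "nat \<Rightarrow> vec3 \<Rightarrow> vec3" where
  "Mrot i q = (case q of (q1, q2, q3) \<Rightarrow>
     (if i = 1 then (q3, q1, q2) else if i = 2 then (q2, q3, q1) else (q1, q2, q3)))"

definition pmap :: "vec3 \<Rightarrow> real \<times> real" where
  "pmap x = (case x of (a, b, c) \<Rightarrow> (3*a + 6*b - 1, 3*a - 1))"

definition Rmat :: "real \<times> real \<Rightarrow> real \<times> real" where
  "Rmat u = (case u of (a, b) \<Rightarrow> ((a - 3*b) / 2, (a + b) / 2))"

definition Ucal :: "nat \<Rightarrow> (real \<times> real) set" where
  "Ucal k = {(x, y). x \<in> \<int> \<and> y \<in> \<int> \<and> x^2 + 3 * y^2 = real k}"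

definition transl :: "(hs \<Rightarrow> hs) \<Rightarrow> vec3" where
  "transl w = (THE q. q \<in> Mlat \<and> (\<exists>u \<in> Wfin. w = tr q \<circ> u))"

definition Ocal :: "(hs \<Rightarrow> hs) \<Rightarrow> (real \<times> real) set" where
  "Ocal w = {(Rmat ^^ k) (pmap (transl w)) | k. k \<in> {1..6::nat}}"

definition Ohat :: "(hs \<Rightarrow> hs) \<Rightarrow> (real \<times> real) set" where
  "Ohat v = (THE S. \<exists>i w. i < 3 \<and> w \<in> Wup0 \<and> v = sigmaA i \<circ> w \<and>
      S = {pmap (omega i + Mrot i (transl w)), - pmap (omega i + Mrot i (transl w))})"

end

theory Submission
  imports Defs
begin

(* Every w in W factors as t_q u with q in M and u in W_0, and
   sigma_i t_q = t_(omega_i + M_i q) u_i with u_i in W_0 fixing Lambda_0.  Hence sigma_i w maps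
   Lambda_0 to t_x Lambda_0 with x = omega_i + M_i q, so Ohat(sigma_i w) = {p(x), -p(x)}, and
   L_(Lambda_0)(sigma_i w) = L(x) is a quadratic function of x with |p(x)|^2 = 12 L(x) + 4,
   where |(a, b)|^2 = a^2 + 3 b^2.

   (1) R has order 6 and maps p(omega_i + M_i q) to -p(omega_(i+1) + M_(i+1) q) (indices mod 3),
   so the R-orbit of p(q) consists of the three pairs.

   (2) An integer solution (m, n) of m^2 + 3 n^2 = 12 N + 4 has m = n mod 2 and m /= 0 mod 3, and
   such pairs are exactly the points +-p(omega_i + y), y in M, each occurring once.  Taking the
   translation part is a bijection from W^0 onto M: W^0 consists of the minimal length coset
   representatives of W/W_0, which are detected by the positivity of w alpha_1 and w alpha_2
   because the Coxeter length equals the number of positive real roots made negative. *)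

lemma sref0_apply [simp]: "sref 0 (a1, a2, d, l) = (l - a2, l - a1, d - l + a1 + a2, l)"
  by (simp add: sref_def refl_def ip_def al0_def al1_def al2_def dlt_def fin_def dcoef_def
      lcoef_def dot3_def algebra_simps)

lemma sref1_apply [simp]: "sref 1 (a1, a2, d, l) = (a2 - a1, a2, d, l)"
  by (simp add: sref_def refl_def ip_def al1_def fin_def dcoef_def lcoef_def dot3_def)

lemma sref_Suc_0_apply [simp]: "sref (Suc 0) (a1, a2, d, l) = (a2 - a1, a2, d, l)"
  using sref1_apply by simp

lemma sref2_apply [simp]: "sref 2 (a1, a2, d, l) = (a1, a1 - a2, d, l)"
  by (simp add: sref_def refl_def ip_def al2_def fin_def dcoef_def lcoef_def dot3_def)

lemma sref_cases: "sref i = sref 0 \<or> sref i = sref 1 \<or> sref i = sref 2"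
  by (simp add: sref_def)

lemma tr_apply [simp]:
  "tr (x1, x2, x3) (a1, a2, d, l) =
     (a1 + l * x1, a2 - l * x3,
      d - (a1 * x1 + (a2 - a1) * x2 - a2 * x3 + 1/2 * (x1 * x1 + x2 * x2 + x3 * x3) * l), l)"
  by (simp add: tr_def pair_c_def emb_def fin_def dcoef_def lcoef_def dot3_def dlt_def algebra_simps)

lemma hs_fun_eqI: "(\<And>a1 a2 d l. f (a1, a2, d, l) = g (a1, a2, d, l)) \<Longrightarrow> f = (g :: hs \<Rightarrow> hs)"
  by (rule ext) (metis prod_cases4)

lemma word_Nil [simp]: "word [] = id"
  by (simp add: word_def)

lemma word_Cons [simp]: "word (i # ws) = sref i \<circ> word ws"
  by (simp add: word_def)

lemma word_append [simp]: "word (ws @ vs) = word ws \<circ> word vs"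
  by (induction ws) (simp_all add: comp_assoc)

lemma Waff_eq_words: "Waff = {word ws | ws. set ws \<subseteq> {0, 1, 2}}"
proof (intro equalityI subsetI)
  fix g assume "g \<in> Waff"
  then show "g \<in> {word ws | ws. set ws \<subseteq> {0, 1, 2}}"
    unfolding Waff_def
  proof (induction rule: gen.induct)
    case gen_id
    show ?case by (auto intro!: exI[of _ "[]"])
  next
    case (gen_step s g)
    then obtain i ws where "i \<in> {0, 1, 2}" "s = sref i" "set ws \<subseteq> {0, 1, 2}" "g = word ws"
      by auto
    then show ?case by (auto intro!: exI[of _ "i # ws"])
  qed
next
  fix g assume "g \<in> {word ws | ws. set ws \<subseteq> {0, 1, 2}}"
  then obtain ws where "set ws \<subseteq> {0, 1, 2}" "g = word ws" by blast
  then show "g \<in> Waff"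
    unfolding Waff_def by (induction ws arbitrary: g) (auto intro: gen.intros)
qed

lemma word_in_Waff: "set ws \<subseteq> {0, 1, 2} \<Longrightarrow> word ws \<in> Waff"
  by (auto simp: Waff_eq_words)

lemma id_in_Waff: "id \<in> Waff"
  using word_in_Waff[of "[]"] by simp

lemma sref_in_Waff: "i \<in> {0, 1, 2} \<Longrightarrow> sref i \<in> Waff"
  using word_in_Waff[of "[i]"] by simp

lemma comp_in_Waff: "g \<in> Waff \<Longrightarrow> h \<in> Waff \<Longrightarrow> g \<circ> h \<in> Waff"
proof -
  assume "g \<in> Waff" "h \<in> Waff"
  then obtain ws vs where "set ws \<subseteq> {0, 1, 2}" "g = word ws" "set vs \<subseteq> {0, 1, 2}" "h = word vs"
    unfolding Waff_eq_words by blast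
  then show ?thesis using word_in_Waff[of "ws @ vs"] by simp
qed

lemma gen_mono: "g \<in> gen S \<Longrightarrow> S \<subseteq> T \<Longrightarrow> g \<in> gen T"
  by (induction rule: gen.induct) (auto intro: gen.intros)

lemma Wfin_subset_Waff: "Wfin \<subseteq> Waff"
  unfolding Wfin_def Waff_def by (auto elim: gen_mono)

lemma sref_comp_in_Wfin: "u \<in> Wfin \<Longrightarrow> i \<in> {1, 2} \<Longrightarrow> sref i \<circ> u \<in> Wfin"
  unfolding Wfin_def by (auto intro: gen.intros)

lemma comp_sref_in_Wfin: "u \<in> Wfin \<Longrightarrow> i \<in> {1, 2} \<Longrightarrow> u \<circ> sref i \<in> Wfin"
  unfolding Wfin_def
proof (induction rule: gen.induct)
  case gen_id
  then show ?case using gen.gen_step[OF _ gen.gen_id, of "sref i"] by auto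
next
  case (gen_step s g)
  then have "g \<circ> sref i \<in> gen {sref 1, sref 2}" by blast
  then have "s \<circ> (g \<circ> sref i) \<in> gen {sref 1, sref 2}" by (rule gen.gen_step[OF gen_step.hyps(1)])
  then show ?case by (simp only: comp_assoc)
qed

section \<open>Translations\<close>

definition V0 :: "vec3 set" where
  "V0 = {(a, b, c). a + b + c = 0}"

definition swap12 :: "vec3 \<Rightarrow> vec3" where
  "swap12 q = (case q of (a, b, c) \<Rightarrow> (b, a, c))"

definition swap23 :: "vec3 \<Rightarrow> vec3" where
  "swap23 q = (case q of (a, b, c) \<Rightarrow> (a, c, b))"

definition swap13 :: "vec3 \<Rightarrow> vec3" where
  "swap13 q = (case q of (a, b, c) \<Rightarrow> (c, b, a))"

definition w0_longest :: "hs \<Rightarrow> hs" where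
  "w0_longest = sref 1 \<circ> sref 2 \<circ> sref 1"

definition theta :: vec3 where
  "theta = (1, 0, -1)"

lemma w0_longest_apply [simp]: "w0_longest (a1, a2, d, l) = (- a2, - a1, d, l)"
  by (simp add: w0_longest_def)

lemma V0E:
  assumes "q \<in> V0"
  obtains a b where "q = (a, b, - a - b)"
proof -
  obtain a b c where "q = (a, b, c)" "a + b + c = 0" using assms by (auto simp: V0_def)
  then have "q = (a, b, - a - b)" by simp
  then show ?thesis by (rule that)
qed

lemma V0_scaleR: "a \<in> V0 \<Longrightarrow> c *\<^sub>R a \<in> V0"
  by (elim V0E) (simp add: V0_def algebra_simps)

lemma Mlat_subset_V0: "Mlat \<subseteq> V0"
  by (auto simp: Mlat_def V0_def)

lemma MlatE:
  assumes "q \<in> Mlat"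
  obtains a b where "q = (of_int a, of_int b, - of_int a - of_int b)"
proof -
  obtain x y z where q: "q = (x, y, z)" "x \<in> \<int>" "y \<in> \<int>" "x + y + z = 0"
    using assms by (auto simp: Mlat_def)
  then obtain a b where "x = of_int a" "y = of_int b" by (auto elim!: Ints_cases)
  with q have "q = (of_int a, of_int b, - of_int a - of_int b)" by simp
  then show ?thesis by (rule that)
qed

lemma of_int_in_Mlat: "(of_int a, of_int b, - of_int a - of_int b) \<in> Mlat"
  by (simp add: Mlat_def)

lemma Mlat_add: "a \<in> Mlat \<Longrightarrow> b \<in> Mlat \<Longrightarrow> a + b \<in> Mlat"
  by (auto simp: Mlat_def)

lemma swap_in_Mlat: "q \<in> Mlat \<Longrightarrow> swap12 q \<in> Mlat" "q \<in> Mlat \<Longrightarrow> swap23 q \<in> Mlat"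
    "q \<in> Mlat \<Longrightarrow> swap13 q \<in> Mlat"
  by (auto simp: Mlat_def swap12_def swap23_def swap13_def)

lemma theta_in_Mlat: "theta \<in> Mlat"
  by (simp add: Mlat_def theta_def)

lemma sref1_comp_tr: "q \<in> V0 \<Longrightarrow> sref 1 \<circ> tr q = tr (swap12 q) \<circ> sref 1"
  by (elim V0E) (rule hs_fun_eqI, simp add: swap12_def algebra_simps)

lemma sref2_comp_tr: "q \<in> V0 \<Longrightarrow> sref 2 \<circ> tr q = tr (swap23 q) \<circ> sref 2"
  by (elim V0E) (rule hs_fun_eqI, simp add: swap23_def algebra_simps)

lemma w0_longest_comp_tr: "q \<in> V0 \<Longrightarrow> w0_longest \<circ> tr q = tr (swap13 q) \<circ> w0_longest"
  by (elim V0E) (rule hs_fun_eqI, simp add: swap13_def algebra_simps)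

lemma sref0_eq: "sref 0 = tr theta \<circ> w0_longest"
  by (rule hs_fun_eqI) (simp add: theta_def algebra_simps)

lemma tr_comp_tr: "a \<in> V0 \<Longrightarrow> b \<in> V0 \<Longrightarrow> tr a \<circ> tr b = tr (a + b)"
  by (elim V0E) (rule hs_fun_eqI, simp add: algebra_simps)

lemma tr_zero: "tr 0 = id"
  by (rule hs_fun_eqI) (simp add: zero_prod_def)

lemma fin_tr_Lam0: "q \<in> V0 \<Longrightarrow> fin (tr q Lam0) = q"
  by (elim V0E) (simp add: Lam0_def fin_def)

lemma Wfin_relations:
  "sref 1 \<circ> sref 1 = id" "sref 2 \<circ> sref 2 = id"
  "sref 1 \<circ> (sref 1 \<circ> sref 2) = sref 2" "sref 2 \<circ> (sref 2 \<circ> sref 1) = sref 1"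
  "sref 1 \<circ> (sref 2 \<circ> sref 1) = w0_longest" "sref 2 \<circ> (sref 1 \<circ> sref 2) = w0_longest"
  "sref 1 \<circ> w0_longest = sref 2 \<circ> sref 1" "sref 2 \<circ> w0_longest = sref 1 \<circ> sref 2"
  by (rule hs_fun_eqI; simp)+

lemma Wfin_cases:
  "u \<in> Wfin \<Longrightarrow> u \<in> {id, sref 1, sref 2, sref 1 \<circ> sref 2, sref 2 \<circ> sref 1, w0_longest}"
  unfolding Wfin_def
  by (induction rule: gen.induct) (auto simp: Wfin_relations)

lemma Wfin_fixes_Lam0: "u \<in> Wfin \<Longrightarrow> u Lam0 = Lam0"
  unfolding Wfin_def by (induction rule: gen.induct) (auto simp: Lam0_def)

lemma w0_longest_comp_in_Wfin: "u \<in> Wfin \<Longrightarrow> w0_longest \<circ> u \<in> Wfin"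
  unfolding w0_longest_def by (simp add: comp_assoc sref_comp_in_Wfin)

lemma Waff_decomp:
  assumes "w \<in> Waff"
  obtains q u where "q \<in> Mlat" "u \<in> Wfin" "w = tr q \<circ> u"
proof -
  have "\<exists>q u. q \<in> Mlat \<and> u \<in> Wfin \<and> w = tr q \<circ> u"
    using assms unfolding Waff_def
  proof (induction rule: gen.induct)
    case gen_id
    have "(0 :: vec3) \<in> Mlat" "id \<in> Wfin"
      by (simp_all add: Mlat_def zero_prod_def Wfin_def gen.gen_id)
    then show ?case using tr_zero by (metis comp_id)
  next
    case (gen_step s g)
    then obtain q u where qu: "q \<in> Mlat" "u \<in> Wfin" "g = tr q \<circ> u" by blast
    have V: "q \<in> V0" "theta \<in> V0" "swap13 q \<in> V0"
      using qu(1) theta_in_Mlat swap_in_Mlat Mlat_subset_V0 by blast+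
    from gen_step consider "s = sref 0" | "s = sref 1" | "s = sref 2" by auto
    then show ?case
    proof cases
      case 1
      have "s \<circ> g = tr theta \<circ> (w0_longest \<circ> tr q) \<circ> u"
        by (simp add: 1 qu(3) sref0_eq comp_assoc)
      also have "\<dots> = (tr theta \<circ> tr (swap13 q)) \<circ> (w0_longest \<circ> u)"
        by (simp add: w0_longest_comp_tr[OF V(1)] comp_assoc)
      finally have "s \<circ> g = tr (theta + swap13 q) \<circ> (w0_longest \<circ> u)"
        by (simp add: tr_comp_tr[OF V(2,3)])
      moreover have "theta + swap13 q \<in> Mlat"
        using qu(1) by (simp add: Mlat_add theta_in_Mlat swap_in_Mlat)
      ultimately show ?thesis using qu(2) w0_longest_comp_in_Wfin by blast
    next
      case 2
      have "s \<circ> g = tr (swap12 q) \<circ> (sref 1 \<circ> u)"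
        by (simp only: 2 qu(3) o_assoc sref1_comp_tr[OF V(1)])
      moreover have "swap12 q \<in> Mlat" using qu(1) by (rule swap_in_Mlat)
      ultimately show ?thesis using qu(2) sref_comp_in_Wfin by blast
    next
      case 3
      have "s \<circ> g = tr (swap23 q) \<circ> (sref 2 \<circ> u)"
        by (simp only: 3 qu(3) o_assoc sref2_comp_tr[OF V(1)])
      moreover have "swap23 q \<in> Mlat" using qu(1) by (rule swap_in_Mlat)
      ultimately show ?thesis using qu(2) sref_comp_in_Wfin by blast
    qed
  qed
  then show ?thesis using that by blast
qed

lemma transl_tr_comp:
  assumes "q \<in> Mlat" "u \<in> Wfin"
  shows "transl (tr q \<circ> u) = q"
  unfolding transl_def
proof (rule the_equality)
  show "q \<in> Mlat \<and> (\<exists>u'\<in>Wfin. tr q \<circ> u = tr q \<circ> u')" using assms by blast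
next
  fix q' assume "q' \<in> Mlat \<and> (\<exists>u'\<in>Wfin. tr q \<circ> u = tr q' \<circ> u')"
  then obtain u' where q': "q' \<in> Mlat" "u' \<in> Wfin" "tr q \<circ> u = tr q' \<circ> u'" by blast
  then have "tr q (u Lam0) = tr q' (u' Lam0)" by (metis comp_apply)
  then have "tr q Lam0 = tr q' Lam0" using assms(2) q'(2) by (simp add: Wfin_fixes_Lam0)
  then show "q' = q" using assms(1) q'(1) Mlat_subset_V0 by (metis fin_tr_Lam0 subsetD)
qed

lemma transl_in_Mlat: "w \<in> Waff \<Longrightarrow> transl w \<in> Mlat"
  by (metis Waff_decomp transl_tr_comp)

lemma Waff_eq_tr_transl:
  assumes "w \<in> Waff"
  obtains u where "u \<in> Wfin" "w = tr (transl w) \<circ> u"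
  using assms by (metis Waff_decomp transl_tr_comp)

lemma tr_eq_word:
  "tr (1, 0, -1) = word [0, 1, 2, 1]" "tr (-1, 0, 1) = word [1, 2, 1, 0]"
  "tr (0, 1, -1) = word [1, 0, 1, 2]" "tr (0, -1, 1) = word [2, 1, 0, 1]"
  by (rule hs_fun_eqI; simp add: algebra_simps)+

lemma tr_of_int_scaleR_in_Waff:
  assumes "r \<in> V0" "tr r \<in> Waff" "tr (- r) \<in> Waff"
  shows "tr (of_int k *\<^sub>R r) \<in> Waff"
proof (induction k rule: int_induct[where k = 0])
  case base
  show ?case using id_in_Waff tr_zero by (metis of_int_0 scaleR_zero_left)
next
  case (step1 k)
  have "tr (of_int (k + 1) *\<^sub>R r) = tr (of_int k *\<^sub>R r) \<circ> tr r"
    using assms(1) by (simp add: tr_comp_tr V0_scaleR algebra_simps)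
  then show ?case using step1 assms(2) comp_in_Waff by metis
next
  case (step2 k)
  have "- r \<in> V0" using V0_scaleR[OF assms(1), of "-1"] by simp
  then have "tr (of_int (k - 1) *\<^sub>R r) = tr (of_int k *\<^sub>R r) \<circ> tr (- r)"
    using assms(1) by (simp add: tr_comp_tr V0_scaleR algebra_simps)
  then show ?case using step2 assms(3) comp_in_Waff by metis
qed

lemma tr_in_Waff:
  assumes "q \<in> Mlat"
  shows "tr q \<in> Waff"
proof -
  obtain a b where q: "q = (of_int a, of_int b, - of_int a - of_int b)"
    using assms by (rule MlatE)
  define r s :: vec3 where "r = (1, 0, -1)" and "s = (0, 1, -1)"
  have V: "r \<in> V0" "s \<in> V0" by (simp_all add: r_def s_def V0_def)
  have "tr r \<in> Waff" "tr (- r) \<in> Waff" "tr s \<in> Waff" "tr (- s) \<in> Waff"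
    by (simp_all add: r_def s_def tr_eq_word word_in_Waff del: word_Cons)
  then have "tr (of_int a *\<^sub>R r) \<in> Waff" "tr (of_int b *\<^sub>R s) \<in> Waff"
    using V tr_of_int_scaleR_in_Waff by blast+
  moreover have "q = of_int a *\<^sub>R r + of_int b *\<^sub>R s"
    by (simp add: q r_def s_def)
  ultimately show ?thesis
    using V by (metis comp_in_Waff tr_comp_tr V0_scaleR)
qed

section \<open>Real roots and Coxeter length\<close>

definition alpha :: "nat \<Rightarrow> hs" where
  "alpha i = (if i = 0 then al0 else if i = 1 then al1 else al2)"

definition fin_pos_roots :: "(real \<times> real) set" where
  "fin_pos_roots = {(1, 0), (0, 1), (1, 1)}"

definition pos_roots :: "hs set" where
  "pos_roots = {(a1, a2, d, 0) | a1 a2 d. d \<in> \<int> \<and>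
     ((a1, a2) \<in> fin_pos_roots \<and> 0 \<le> d \<or> (- a1, - a2) \<in> fin_pos_roots \<and> 1 \<le> d)}"

definition real_roots :: "hs set" where
  "real_roots = pos_roots \<union> uminus ` pos_roots"

definition inversions :: "(hs \<Rightarrow> hs) \<Rightarrow> hs set" where
  "inversions g = {x \<in> pos_roots. - g x \<in> pos_roots}"

lemma alpha_simps [simp]:
  "alpha 0 = (-1, -1, 1, 0)" "alpha 1 = (1, 0, 0, 0)" "alpha (Suc 0) = (1, 0, 0, 0)"
  "alpha 2 = (0, 1, 0, 0)"
  by (simp_all add: alpha_def al0_def al1_def al2_def dlt_def)

lemma sref_alpha_cases:
  "(sref i, alpha i) \<in> {(sref 0, alpha 0), (sref 1, alpha 1), (sref 2, alpha 2)}"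
  by (simp add: sref_def alpha_def)

lemma pos_roots_iff [simp]:
  "(a1, a2, d, l) \<in> pos_roots \<longleftrightarrow> l = 0 \<and> d \<in> \<int> \<and>
     ((a1, a2) \<in> fin_pos_roots \<and> 0 \<le> d \<or> (- a1, - a2) \<in> fin_pos_roots \<and> 1 \<le> d)"
  by (auto simp: pos_roots_def)

lemma uminus_pos_root: "x \<in> pos_roots \<Longrightarrow> - x \<notin> pos_roots"
  by (cases x) (simp add: fin_pos_roots_def, linarith)

lemma alpha_in_pos_roots: "alpha i \<in> pos_roots"
  using sref_alpha_cases[of i] by (auto simp: fin_pos_roots_def)

lemma sref_uminus: "sref i (- x) = - sref i x"
  using sref_cases[of i] by (cases x) auto

lemma sref_sref [simp]: "sref i (sref i x) = x"
  using sref_cases[of i] by (cases x) auto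

lemma sref_alpha: "sref i (alpha i) = - alpha i"
  using sref_alpha_cases[of i] by auto

lemma sref_pos_root:
  assumes "x \<in> pos_roots" "x \<noteq> alpha i"
  shows "sref i x \<in> pos_roots"
proof -
  obtain a1 a2 d where x: "x = (a1, a2, d, 0)" "d \<in> \<int>"
    and root: "(a1, a2) \<in> fin_pos_roots \<and> 0 \<le> d \<or> (- a1, - a2) \<in> fin_pos_roots \<and> 1 \<le> d"
    using assms(1) by (cases x) auto
  have "d - 1 \<in> \<int>" using x(2) by simp
  \<comment> \<open>integrality rules out 1 < d < 2, where s_0 would map x to a negative root\<close>
  then have "d = 1 \<or> 1 \<le> \<bar>d - 1\<bar>" by (metis Ints_nonzero_abs_ge1 right_minus_eq)
  then show ?thesis
    using root assms(2) sref_alpha_cases[of i] x(2)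
    by (auto simp: x fin_pos_roots_def)
qed

lemma sref_pos_root_ne_alpha: "x \<in> pos_roots \<Longrightarrow> sref i x \<noteq> alpha i"
  using uminus_pos_root[OF alpha_in_pos_roots] by (metis sref_alpha sref_sref)

lemma sref_real_root: "x \<in> real_roots \<Longrightarrow> sref i x \<in> real_roots"
proof -
  have pos: "sref i y \<in> real_roots \<and> sref i (- y) \<in> real_roots" if "y \<in> pos_roots" for y
  proof (cases "y = alpha i")
    case True
    then show ?thesis using that by (auto simp: real_roots_def sref_alpha sref_uminus)
  next
    case False
    then show ?thesis using that sref_pos_root by (auto simp: real_roots_def sref_uminus)
  qed
  assume "x \<in> real_roots"
  then show ?thesis using pos unfolding real_roots_def by blast
qed

lemma Waff_uminus: "g \<in> Waff \<Longrightarrow> g (- x) = - g x"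
  unfolding Waff_def
  by (induction arbitrary: x rule: gen.induct) (auto simp: sref_uminus)

lemma Waff_real_root: "g \<in> Waff \<Longrightarrow> x \<in> real_roots \<Longrightarrow> g x \<in> real_roots"
  unfolding Waff_def
  by (induction arbitrary: x rule: gen.induct) (auto simp: sref_real_root)

lemma inversions_comp_sref:
  assumes g: "g \<in> Waff"
  shows "inversions (g \<circ> sref i) =
    sref i ` (inversions g - {alpha i}) \<union> (if g (alpha i) \<in> pos_roots then {alpha i} else {})"
proof -
  have g_sref_alpha: "- g (sref i (alpha i)) = g (alpha i)"
    using g by (simp add: sref_alpha Waff_uminus)
  show ?thesis
  proof (intro equalityI subsetI)
    fix x assume x: "x \<in> inversions (g \<circ> sref i)"
    show "x \<in> sref i ` (inversions g - {alpha i}) \<union> (if g (alpha i) \<in> pos_roots then {alpha i} else {})"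
    proof (cases "x = alpha i")
      case True
      then show ?thesis using x g_sref_alpha by (simp add: inversions_def)
    next
      case False
      then have "sref i x \<in> inversions g - {alpha i}"
        using x sref_pos_root sref_pos_root_ne_alpha by (simp add: inversions_def)
      then show ?thesis by (metis UnI1 image_eqI sref_sref)
    qed
  next
    fix x
    assume "x \<in> sref i ` (inversions g - {alpha i}) \<union> (if g (alpha i) \<in> pos_roots then {alpha i} else {})"
    then consider y where "y \<in> inversions g" "y \<noteq> alpha i" "x = sref i y"
      | "x = alpha i" "g (alpha i) \<in> pos_roots"
      by (auto split: if_splits)
    then show "x \<in> inversions (g \<circ> sref i)"
    proof cases
      case 1
      then show ?thesis using sref_pos_root by (simp add: inversions_def)
    next
      case 2
      then show ?thesis using g_sref_alpha alpha_in_pos_roots by (simp add: inversions_def)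
    qed
  qed
qed

lemma finite_inversions:
  assumes "g \<in> Waff"
  shows "finite (inversions g)"
proof -
  obtain ws where ws: "set ws \<subseteq> {0, 1, 2}" "g = word ws"
    using assms unfolding Waff_eq_words by blast
  have "finite (inversions (word ws))" using ws(1)
  proof (induction ws rule: rev_induct)
    case Nil
    have "inversions (word []) = {}" using uminus_pos_root by (auto simp: inversions_def)
    then show ?case by (metis finite.emptyI)
  next
    case (snoc i ws)
    then have "word ws \<in> Waff" by (simp add: word_in_Waff)
    moreover have "word (ws @ [i]) = word ws \<circ> sref i" by simp
    ultimately show ?case using snoc.IH snoc.prems by (simp only: inversions_comp_sref) auto
  qed
  then show ?thesis using ws(2) by simp
qed

lemma alpha_in_inversions_iff:
  assumes "g \<in> Waff"
  shows "alpha i \<in> inversions g \<longleftrightarrow> g (alpha i) \<notin> pos_roots"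
proof -
  have "g (alpha i) \<in> pos_roots \<or> - g (alpha i) \<in> pos_roots"
    using Waff_real_root[OF assms, of "alpha i"] alpha_in_pos_roots
    by (auto simp: real_roots_def)
  moreover have "\<not> (g (alpha i) \<in> pos_roots \<and> - g (alpha i) \<in> pos_roots)"
    using uminus_pos_root by blast
  ultimately show ?thesis
    unfolding inversions_def using alpha_in_pos_roots by blast
qed

lemma card_inversions_comp_sref:
  assumes g: "g \<in> Waff"
  shows "card (inversions (g \<circ> sref i)) =
    (if g (alpha i) \<in> pos_roots then Suc (card (inversions g)) else card (inversions g) - 1)"
proof -
  have fin: "finite (inversions g)" using g by (rule finite_inversions)
  have card_image: "card (sref i ` (inversions g - {alpha i})) = card (inversions g - {alpha i})"
    by (rule card_image) (metis inj_onI sref_sref)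
  have alpha_notin: "alpha i \<notin> sref i ` (inversions g - {alpha i})"
  proof
    assume "alpha i \<in> sref i ` (inversions g - {alpha i})"
    then obtain y where "y \<in> pos_roots" "alpha i = sref i y"
      unfolding inversions_def by blast
    then show False using sref_pos_root_ne_alpha by metis
  qed
  show ?thesis
  proof (cases "g (alpha i) \<in> pos_roots")
    case True
    then have "inversions g - {alpha i} = inversions g"
      using alpha_in_inversions_iff[OF g] by auto
    then show ?thesis
      using True fin card_image alpha_notin by (simp add: inversions_comp_sref[OF g])
  next
    case False
    then have "alpha i \<in> inversions g" using alpha_in_inversions_iff[OF g] by auto
    then show ?thesis
      using False fin card_image by (simp add: inversions_comp_sref[OF g])
  qed
qed

(* Moving of_int outwards turns the chamber conditions for integral translations
   into Presburger arithmetic. *)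
lemma of_int_collect:
  "real_of_int x + real_of_int y = real_of_int (x + y)"
  "real_of_int x - real_of_int y = real_of_int (x - y)"
  "- real_of_int x = real_of_int (- x)"
  "numeral n * real_of_int x = real_of_int (numeral n * x)"
  "real_of_int x + 1 = real_of_int (x + 1)" "1 + real_of_int x = real_of_int (1 + x)"
  "real_of_int x - 1 = real_of_int (x - 1)" "1 - real_of_int x = real_of_int (1 - x)"
  "real_of_int x + numeral n = real_of_int (x + numeral n)"
  "numeral n + real_of_int x = real_of_int (numeral n + x)"
  "real_of_int x - numeral n = real_of_int (x - numeral n)"
  "numeral n - real_of_int x = real_of_int (numeral n - x)"
  by simp_all

lemmas of_int_compare = of_int_eq_iff of_int_le_iff of_int_less_iff of_int_eq_0_iff
  of_int_0_eq_iff of_int_eq_1_iff of_int_0_le_iff of_int_le_0_iff of_int_0_less_iff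
  of_int_less_0_iff of_int_1_le_iff of_int_le_1_iff of_int_1_less_iff of_int_less_1_iff
  of_int_eq_numeral_iff of_int_le_numeral_iff of_int_numeral_le_iff of_int_less_numeral_iff
  of_int_numeral_less_iff

lemma Waff_eq_id_if_simple_roots_pos:
  assumes g: "g \<in> Waff"
    and pos: "g (alpha 0) \<in> pos_roots" "g (alpha 1) \<in> pos_roots" "g (alpha 2) \<in> pos_roots"
  shows "g = id"
proof -
  obtain q u where q: "q \<in> Mlat" and u: "u \<in> Wfin" and g_eq: "g = tr q \<circ> u"
    using g by (rule Waff_decomp)
  obtain a b where q_eq: "q = (of_int a, of_int b, - of_int a - of_int b)"
    using q by (rule MlatE)
  have "u = id \<and> a = 0 \<and> b = 0"
    using Wfin_cases[OF u] pos unfolding g_eq q_eq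
    by (elim insertE emptyE; simp add: fin_pos_roots_def;
        (simp only: of_int_collect of_int_compare)?; presburger)
  then show ?thesis by (simp add: g_eq q_eq tr_zero flip: zero_prod_def)
qed

lemma card_inversions_word_le:
  "set ws \<subseteq> {0, 1, 2} \<Longrightarrow> card (inversions (word ws)) \<le> length ws"
proof (induction ws rule: rev_induct)
  case Nil
  have "inversions (word []) = {}" using uminus_pos_root by (auto simp: inversions_def)
  then show ?case by (simp only: card.empty)
next
  case (snoc i ws)
  then have "word ws \<in> Waff" by (simp add: word_in_Waff)
  then have "card (inversions (word (ws @ [i]))) \<le> Suc (card (inversions (word ws)))"
    by (auto simp: card_inversions_comp_sref)
  then show "card (inversions (word (ws @ [i]))) \<le> length (ws @ [i])" using snoc by simp
qed

lemma exists_reduced_word: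
  "g \<in> Waff \<Longrightarrow> \<exists>ws. set ws \<subseteq> {0, 1, 2} \<and> length ws = card (inversions g) \<and> word ws = g"
proof (induction "card (inversions g)" arbitrary: g)
  case 0
  then have "inversions g = {}" using finite_inversions by simp
  then have "g = id"
    using "0.prems" alpha_in_inversions_iff Waff_eq_id_if_simple_roots_pos by blast
  then show ?case using "0.hyps" by (intro exI[of _ "[]"]) simp
next
  case (Suc n)
  have "\<exists>i\<in>{0, 1, 2}. g (alpha i) \<notin> pos_roots"
  proof (rule ccontr)
    assume "\<not> ?thesis"
    then have "g = id" using Suc.prems by (simp add: Waff_eq_id_if_simple_roots_pos)
    then have "inversions g = {}" using uminus_pos_root by (auto simp: inversions_def)
    then show False using Suc.hyps(2) by simp
  qed
  then obtain i where i: "i \<in> {0, 1, 2}" "g (alpha i) \<notin> pos_roots" by blast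
  have "g \<circ> sref i \<in> Waff" using Suc.prems i(1) by (simp add: comp_in_Waff sref_in_Waff)
  moreover have "card (inversions (g \<circ> sref i)) = n"
    using card_inversions_comp_sref[OF Suc.prems] i(2) Suc.hyps(2) by simp
  ultimately obtain ws where ws: "set ws \<subseteq> {0, 1, 2}" "length ws = n" "word ws = g \<circ> sref i"
    using Suc.hyps(1) by metis
  have "word (ws @ [i]) = g \<circ> sref i \<circ> sref i" using ws(3) by simp
  also have "\<dots> = g" by (simp add: fun_eq_iff)
  finally have "word (ws @ [i]) = g" .
  moreover have "set (ws @ [i]) \<subseteq> {0, 1, 2}" using ws(1) i(1) by simp
  moreover have "length (ws @ [i]) = card (inversions g)" using ws(2) Suc.hyps(2) by simp
  ultimately show ?case by (intro exI[of _ "ws @ [i]"] conjI)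
qed

lemma clen_eq_card_inversions:
  assumes "g \<in> Waff"
  shows "clen g = card (inversions g)"
  unfolding clen_def
proof (rule Least_equality)
  show "\<exists>ws. set ws \<subseteq> {0, 1, 2} \<and> length ws = card (inversions g) \<and> word ws = g"
    using assms by (rule exists_reduced_word)
next
  fix m assume "\<exists>ws. set ws \<subseteq> {0, 1, 2} \<and> length ws = m \<and> word ws = g"
  then obtain ws where ws: "set ws \<subseteq> {0, 1, 2}" "length ws = m" "word ws = g" by blast
  then show "card (inversions g) \<le> m" using card_inversions_word_le[OF ws(1)] by simp
qed

lemma clen_less_clen_comp_sref_iff:
  assumes "g \<in> Waff" "i \<in> {0, 1, 2}"
  shows "clen g < clen (g \<circ> sref i) \<longleftrightarrow> g (alpha i) \<in> pos_roots"
proof -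
  have "g \<circ> sref i \<in> Waff" using assms by (simp add: comp_in_Waff sref_in_Waff)
  then show ?thesis
    using assms card_inversions_comp_sref[OF assms(1), of i]
    by (auto simp: clen_eq_card_inversions)
qed

lemma Wup0_iff: "w \<in> Wup0 \<longleftrightarrow> w \<in> Waff \<and> w (alpha 1) \<in> pos_roots \<and> w (alpha 2) \<in> pos_roots"
  unfolding Wup0_def using clen_less_clen_comp_sref_iff[of w 1] clen_less_clen_comp_sref_iff[of w 2]
  by auto

lemma Wup0_subset_Waff: "Wup0 \<subseteq> Waff"
  by (simp add: Wup0_def)

section \<open>Minimal coset representatives\<close>

lemma Wfin_chamber_unique:
  assumes q: "q \<in> Mlat" and u: "u \<in> Wfin" and v: "v \<in> Wfin"
    and pos: "(tr q \<circ> u) (alpha 1) \<in> pos_roots" "(tr q \<circ> u) (alpha 2) \<in> pos_roots"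
      "(tr q \<circ> v) (alpha 1) \<in> pos_roots" "(tr q \<circ> v) (alpha 2) \<in> pos_roots"
  shows "u = v"
proof -
  obtain a b where q_eq: "q = (of_int a, of_int b, - of_int a - of_int b)"
    using q by (rule MlatE)
  show ?thesis
    using Wfin_cases[OF u] Wfin_cases[OF v] pos unfolding q_eq
    by (elim insertE emptyE; simp add: fin_pos_roots_def;
        (simp only: of_int_collect of_int_compare)?; presburger)
qed

lemma inj_on_transl_Wup0: "inj_on transl Wup0"
proof (rule inj_onI)
  fix w w' assume w: "w \<in> Wup0" and w': "w' \<in> Wup0" and eq: "transl w = transl w'"
  then have W: "w \<in> Waff" "w' \<in> Waff" using Wup0_subset_Waff by auto
  obtain u u' where u: "u \<in> Wfin" "w = tr (transl w) \<circ> u"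
    and u': "u' \<in> Wfin" "w' = tr (transl w) \<circ> u'"
    using Waff_eq_tr_transl[OF W(1)] Waff_eq_tr_transl[OF W(2)] eq by metis
  have "u = u'"
    using Wfin_chamber_unique[OF transl_in_Mlat[OF W(1)] u(1) u'(1)] w w' u(2) u'(2)
    by (simp add: Wup0_iff)
  then show "w = w'" using u u' by simp
qed

lemma transl_Wup0_surj: "q \<in> Mlat \<Longrightarrow> \<exists>w\<in>Wup0. transl w = q"
proof -
  assume q: "q \<in> Mlat"
  have "id \<in> Wfin" by (simp add: Wfin_def gen.gen_id)
  then obtain u where u: "u \<in> Wfin"
    and u_min: "\<And>v. v \<in> Wfin \<Longrightarrow> card (inversions (tr q \<circ> u)) \<le> card (inversions (tr q \<circ> v))"
    using ex_has_least_nat[of "\<lambda>v. v \<in> Wfin" id "\<lambda>v. card (inversions (tr q \<circ> v))"] by blast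
  let ?w = "tr q \<circ> u"
  have "u \<in> Waff" using u Wfin_subset_Waff by blast
  then have W: "?w \<in> Waff" by (rule comp_in_Waff[OF tr_in_Waff[OF q]])
  have "?w (alpha k) \<in> pos_roots" if k: "k \<in> {1, 2}" for k
  proof (rule ccontr)
    assume "?w (alpha k) \<notin> pos_roots"
    then have "alpha k \<in> inversions ?w" using alpha_in_inversions_iff[OF W] by blast
    then have "card (inversions ?w) > 0" using finite_inversions[OF W] by (auto simp: card_gt_0_iff)
    then have "card (inversions (?w \<circ> sref k)) < card (inversions ?w)"
      using card_inversions_comp_sref[OF W, of k] \<open>?w (alpha k) \<notin> pos_roots\<close> by simp
    moreover have "card (inversions ?w) \<le> card (inversions (tr q \<circ> (u \<circ> sref k)))"
      using u_min comp_sref_in_Wfin[OF u k] by blast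
    ultimately show False by (simp add: comp_assoc)
  qed
  then have "?w \<in> Wup0" using W unfolding Wup0_iff by blast
  moreover have "transl ?w = q" using q u by (rule transl_tr_comp)
  ultimately show ?thesis by blast
qed

definition sigma_fin :: "nat \<Rightarrow> hs \<Rightarrow> hs" where
  "sigma_fin i = (if i = 1 then sref 1 \<circ> sref 2 else if i = 2 then sref 2 \<circ> sref 1 else id)"

definition hat_point :: "nat \<Rightarrow> vec3 \<Rightarrow> real \<times> real" where
  "hat_point i q = pmap (omega i + Mrot i q)"

definition atl_vec :: "vec3 \<Rightarrow> real" where
  "atl_vec x = (case x of (x1, x2, x3) \<Rightarrow> - x1 + x3 + 3/2 * (x1 * x1 + x2 * x2 + x3 * x3))"

lemma Mrot_Mrot_Mrot: "Mrot i (Mrot i (Mrot i q)) = q"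
  by (cases q) (simp add: Mrot_def)

lemma Mrot_in_Mlat: "q \<in> Mlat \<Longrightarrow> Mrot i q \<in> Mlat"
  by (cases q) (auto simp: Mlat_def Mrot_def)

lemma omega_Mrot_in_V0: "q \<in> V0 \<Longrightarrow> omega i + Mrot i q \<in> V0"
  by (cases q) (auto simp: V0_def Mrot_def omega_def)

lemma sigmaA_comp_tr: "q \<in> V0 \<Longrightarrow> sigmaA i \<circ> tr q = tr (omega i + Mrot i q) \<circ> sigma_fin i"
  by (elim V0E) (rule hs_fun_eqI,
      simp add: sigmaA_def omega_def Mrot_def sigma_fin_def field_simps; simp add: algebra_simps)

lemma sigmaA_comp_Lam0:
  assumes "w \<in> Waff"
  shows "(sigmaA i \<circ> w) Lam0 = tr (omega i + Mrot i (transl w)) Lam0"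
proof -
  obtain u where u: "u \<in> Wfin" "w = tr (transl w) \<circ> u"
    using assms by (rule Waff_eq_tr_transl)
  have "transl w \<in> V0" using assms transl_in_Mlat Mlat_subset_V0 by blast
  then have "sigmaA i \<circ> w = tr (omega i + Mrot i (transl w)) \<circ> (sigma_fin i \<circ> u)"
    by (subst u(2)) (simp add: sigmaA_comp_tr flip: comp_assoc)
  moreover have "sigma_fin i Lam0 = Lam0" by (simp add: sigma_fin_def Lam0_def)
  ultimately show ?thesis using Wfin_fixes_Lam0[OF u(1)] by simp
qed

lemma atl_tr: "x \<in> V0 \<Longrightarrow> pair_rho (Lam0 - tr x Lam0) = atl_vec x"
  by (elim V0E) (simp add: Lam0_def pair_rho_def atl_vec_def field_simps; simp add: algebra_simps)

lemma atl_sigmaA: "w \<in> Waff \<Longrightarrow> atl (sigmaA i \<circ> w) = atl_vec (omega i + Mrot i (transl w))"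
  unfolding atl_def using sigmaA_comp_Lam0 atl_tr omega_Mrot_in_V0 transl_in_Mlat Mlat_subset_V0
  by (metis subsetD)

lemma pmap_norm: "x \<in> V0 \<Longrightarrow> (fst (pmap x))\<^sup>2 + 3 * (snd (pmap x))\<^sup>2 = 12 * atl_vec x + 4"
  by (elim V0E) (simp add: pmap_def atl_vec_def power2_eq_square algebra_simps)

lemma Ohat_sigmaA:
  assumes "i < 3" "w \<in> Wup0"
  shows "Ohat (sigmaA i \<circ> w) = {hat_point i (transl w), - hat_point i (transl w)}"
  unfolding Ohat_def
proof (rule the_equality)
  show "\<exists>j w'. j < 3 \<and> w' \<in> Wup0 \<and> sigmaA i \<circ> w = sigmaA j \<circ> w' \<and>
      {hat_point i (transl w), - hat_point i (transl w)} =
      {pmap (omega j + Mrot j (transl w')), - pmap (omega j + Mrot j (transl w'))}"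
    using assms by (auto simp: hat_point_def)
next
  fix S assume "\<exists>j w'. j < 3 \<and> w' \<in> Wup0 \<and> sigmaA i \<circ> w = sigmaA j \<circ> w' \<and>
      S = {pmap (omega j + Mrot j (transl w')), - pmap (omega j + Mrot j (transl w'))}"
  then obtain j w' where w': "w' \<in> Wup0" "sigmaA i \<circ> w = sigmaA j \<circ> w'"
    and S: "S = {pmap (omega j + Mrot j (transl w')), - pmap (omega j + Mrot j (transl w'))}"
    by blast
  \<comment> \<open>sigma_i w determines omega_i + M_i (transl w) through its value at Lam0\<close>
  have "omega i + Mrot i (transl w) = omega j + Mrot j (transl w')"
    using sigmaA_comp_Lam0 fin_tr_Lam0 omega_Mrot_in_V0 transl_in_Mlat Mlat_subset_V0
      Wup0_subset_Waff assms(2) w' by (metis subsetD)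
  then show "S = {hat_point i (transl w), - hat_point i (transl w)}"
    by (simp add: S hat_point_def)
qed

lemma Rmat_uminus: "Rmat (- x) = - Rmat x"
  by (cases x) (simp add: Rmat_def field_simps)

lemma Rmat_hat_point:
  assumes "q \<in> V0"
  shows "Rmat (hat_point 0 q) = - hat_point 1 q" "Rmat (hat_point 1 q) = - hat_point 2 q"
    "Rmat (hat_point 2 q) = - hat_point 0 q"
  using assms
  by (elim V0E; simp add: hat_point_def Rmat_def pmap_def omega_def Mrot_def field_simps)+

lemma Ocal_eq:
  assumes "w \<in> Waff"
  shows "Ocal w = (\<Union>i\<in>{0, 1, 2}. {hat_point i (transl w), - hat_point i (transl w)})"
proof -
  \<comment> \<open>naming the points keeps numeral_eq_Suc away from their indices below\<close>
  define b0 b1 b2 where "b0 = hat_point 0 (transl w)" and "b1 = hat_point 1 (transl w)"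
    and "b2 = hat_point 2 (transl w)"
  have "transl w \<in> V0" using assms transl_in_Mlat Mlat_subset_V0 by blast
  then have R: "Rmat b0 = - b1" "Rmat b1 = - b2" "Rmat b2 = - b0"
    unfolding b0_def b1_def b2_def by (rule Rmat_hat_point)+
  have "pmap (transl w) = b0"
    by (cases "transl w") (simp add: b0_def hat_point_def omega_def Mrot_def)
  then have "Ocal w = (\<lambda>k. (Rmat ^^ k) b0) ` {1..6}" by (auto simp: Ocal_def)
  also have "{1..6::nat} = {1, 2, 3, 4, 5, 6}" by auto
  also have "(\<lambda>k. (Rmat ^^ k) b0) ` {1, 2, 3, 4, 5, 6} = {- b1, b2, - b0, b1, - b2, b0}"
    by (simp add: numeral_eq_Suc R Rmat_uminus)
  finally show ?thesis by (auto simp: b0_def b1_def b2_def)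
qed

section \<open>Integer points on x^2 + 3 y^2 = 12 N + 4\<close>

definition pmap_int :: "nat \<Rightarrow> int \<Rightarrow> int \<Rightarrow> int \<times> int" where
  "pmap_int i u v =
    (if i = 1 then (3 * u + 6 * v - 1, 3 * u + 1)
     else if i = 2 then (3 * u + 6 * v + 2, 3 * u)
     else (3 * u + 6 * v - 1, 3 * u - 1))"

lemma pmap_omega_of_int:
  "pmap (omega i + (of_int u, of_int v, - of_int u - of_int v)) =
     map_prod of_int of_int (pmap_int i u v)"
  by (simp add: pmap_def omega_def pmap_int_def field_simps)

lemma map_prod_of_int_eq_iff:
  "map_prod real_of_int real_of_int a = map_prod real_of_int real_of_int b \<longleftrightarrow> a = b"
  by (cases a, cases b) simp

lemma map_prod_of_int_uminus:
  "map_prod real_of_int real_of_int (- a) = - map_prod real_of_int real_of_int a"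
  by (cases a) simp

(* The residues mod 3 of the two coordinates separate the six families +-pmap_int i. *)
lemma pmap_int_inj:
  "i < 3 \<Longrightarrow> j < 3 \<Longrightarrow> pmap_int i u v = pmap_int j u' v' \<Longrightarrow> i = j \<and> u = u' \<and> v = v'"
  by (cases "i = 0"; cases "i = 1"; cases "j = 0"; cases "j = 1"; simp add: pmap_int_def; presburger)

lemma pmap_int_neq_uminus: "i < 3 \<Longrightarrow> j < 3 \<Longrightarrow> pmap_int i u v \<noteq> - pmap_int j u' v'"
  by (cases "i = 0"; cases "i = 1"; cases "j = 0"; cases "j = 1"; simp add: pmap_int_def; presburger)

lemma pmap_int_surj:
  fixes m n :: int
  assumes "m mod 2 = n mod 2" "\<not> 3 dvd m"
  shows "\<exists>i<3. \<exists>u v. (m, n) = pmap_int i u v \<or> (m, n) = - pmap_int i u v"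
proof -
  have "\<exists>u v. (m, n) = pmap_int 0 u v \<or> (m, n) = - pmap_int 0 u v \<or>
      (m, n) = pmap_int 1 u v \<or> (m, n) = - pmap_int 1 u v \<or>
      (m, n) = pmap_int 2 u v \<or> (m, n) = - pmap_int 2 u v"
    using assms by (simp add: pmap_int_def) presburger
  moreover have "0 < (3::nat)" "1 < (3::nat)" "2 < (3::nat)" by simp_all
  ultimately show ?thesis by blast
qed

lemma sum_squares_eq_12k_4:
  fixes m n k :: int
  assumes "m\<^sup>2 + 3 * n\<^sup>2 = 12 * k + 4"
  shows "m mod 2 = n mod 2" "\<not> 3 dvd m"
proof -
  have "even (m\<^sup>2 + 3 * n\<^sup>2)" using assms by simp
  then have "even m \<longleftrightarrow> even n" by simp
  then show "m mod 2 = n mod 2" by presburger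
  show "\<not> 3 dvd m"
  proof
    assume "3 dvd m"
    then obtain t where "m = 3 * t" by blast
    then have "3 * (3 * t\<^sup>2 + n\<^sup>2 - 4 * k) = 4" using assms by (simp add: power2_eq_square algebra_simps)
    then have "(3::int) dvd 4" by (metis dvd_triv_left)
    then show False by simp
  qed
qed

lemma Mrot_of_int:
  assumes "q \<in> Mlat"
  obtains u v where "Mrot i q = (of_int u, of_int v, - of_int u - of_int v)"
  using Mrot_in_Mlat[OF assms] by (rule MlatE)

lemma hat_point_eq_pmap_int:
  "Mrot i q = (of_int u, of_int v, - of_int u - of_int v) \<Longrightarrow>
     hat_point i q = map_prod of_int of_int (pmap_int i u v)"
  by (simp add: hat_point_def pmap_omega_of_int)

lemma Ohat_sigmaA_overlap:
  assumes "i < 3" "j < 3" "w \<in> Wup0" "w' \<in> Wup0"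
    and "Ohat (sigmaA i \<circ> w) \<inter> Ohat (sigmaA j \<circ> w') \<noteq> {}"
  shows "i = j \<and> w = w'"
proof -
  have M: "transl w \<in> Mlat" "transl w' \<in> Mlat"
    using assms(3,4) Wup0_subset_Waff transl_in_Mlat by blast+
  obtain u v where uv: "Mrot i (transl w) = (of_int u, of_int v, - of_int u - of_int v)"
    using M(1) by (rule Mrot_of_int)
  obtain u' v' where uv': "Mrot j (transl w') = (of_int u', of_int v', - of_int u' - of_int v')"
    using M(2) by (rule Mrot_of_int)
  let ?a = "map_prod real_of_int real_of_int (pmap_int i u v)"
    and ?b = "map_prod real_of_int real_of_int (pmap_int j u' v')"
  have "{?a, - ?a} \<inter> {?b, - ?b} \<noteq> {}"
    using assms(5) by (simp add: Ohat_sigmaA assms hat_point_eq_pmap_int uv uv')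
  then have "?a = ?b \<or> ?a = - ?b" by auto
  then have "pmap_int i u v = pmap_int j u' v'"
    using pmap_int_neq_uminus[OF assms(1,2)]
    by (auto simp: map_prod_of_int_eq_iff simp flip: map_prod_of_int_uminus)
  then have "i = j" "u = u'" "v = v'" using pmap_int_inj[OF assms(1,2)] by auto
  then have "Mrot i (Mrot i (Mrot i (transl w))) = Mrot i (Mrot i (Mrot i (transl w')))"
    using uv uv' by simp
  then have "transl w = transl w'" by (simp only: Mrot_Mrot_Mrot)
  then have "w = w'" using inj_on_transl_Wup0 assms(3,4) by (auto dest: inj_onD)
  with \<open>i = j\<close> show ?thesis by blast
qed

lemma Ocal_eq_Union_Ohat:
  assumes "w \<in> Wup0"
  shows "Ocal w = (\<Union>i\<in>{0, 1, 2::nat}. Ohat (sigmaA i \<circ> w))"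
proof -
  have "Ohat (sigmaA i \<circ> w) = {hat_point i (transl w), - hat_point i (transl w)}"
    if "i \<in> {0, 1, 2}" for i
    using that assms by (intro Ohat_sigmaA) auto
  then show ?thesis using assms Wup0_subset_Waff by (simp add: Ocal_eq subset_iff)
qed

lemma disjoint_family_on_Ohat_sigmaA:
  assumes "w \<in> Wup0"
  shows "disjoint_family_on (\<lambda>i. Ohat (sigmaA i \<circ> w)) {0, 1, 2::nat}"
  unfolding disjoint_family_on_def
proof (intro ballI impI)
  fix i j :: nat assume "i \<in> {0, 1, 2}" "j \<in> {0, 1, 2}" "i \<noteq> j"
  moreover from this have "i < 3" "j < 3" by auto
  ultimately show "Ohat (sigmaA i \<circ> w) \<inter> Ohat (sigmaA j \<circ> w) = {}"
    using Ohat_sigmaA_overlap[of i j w w] assms by blast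
qed

lemma Bhat_iff:
  "v \<in> Bhat N \<longleftrightarrow>
     (\<exists>i<3. \<exists>w\<in>Wup0. v = sigmaA i \<circ> w \<and> atl_vec (omega i + Mrot i (transl w)) = real N)"
  by (auto simp: Bhat_def SigW0_def atl_sigmaA[OF subsetD[OF Wup0_subset_Waff]]) blast

lemma uminus_in_Ucal: "z \<in> Ucal k \<Longrightarrow> - z \<in> Ucal k"
  by (cases z) (simp add: Ucal_def)

lemma hat_point_norm:
  "q \<in> V0 \<Longrightarrow>
     (fst (hat_point i q))\<^sup>2 + 3 * (snd (hat_point i q))\<^sup>2 = 12 * atl_vec (omega i + Mrot i q) + 4"
  unfolding hat_point_def by (intro pmap_norm omega_Mrot_in_V0)

lemma hat_point_in_Ucal:
  assumes "q \<in> Mlat" "atl_vec (omega i + Mrot i q) = real N"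
  shows "hat_point i q \<in> Ucal (12 * N + 4)"
proof -
  obtain u v where uv: "Mrot i q = (of_int u, of_int v, - of_int u - of_int v)"
    using assms(1) by (rule Mrot_of_int)
  obtain a b where ab: "pmap_int i u v = (a, b)" by fastforce
  have "q \<in> V0" using assms(1) Mlat_subset_V0 by blast
  then have "(fst (hat_point i q))\<^sup>2 + 3 * (snd (hat_point i q))\<^sup>2 = 12 * real N + 4"
    using assms(2) by (simp add: hat_point_norm)
  then show ?thesis by (simp add: Ucal_def hat_point_eq_pmap_int[OF uv] ab)
qed

lemma Union_Ohat_Bhat_subset: "(\<Union>v\<in>Bhat N. Ohat v) \<subseteq> Ucal (12 * N + 4)"
proof
  fix z assume "z \<in> (\<Union>v\<in>Bhat N. Ohat v)"
  then obtain i w where i: "i < 3" and w: "w \<in> Wup0" and z: "z \<in> Ohat (sigmaA i \<circ> w)"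
    and N: "atl_vec (omega i + Mrot i (transl w)) = real N"
    by (auto simp: Bhat_iff)
  have "hat_point i (transl w) \<in> Ucal (12 * N + 4)"
    using w N Wup0_subset_Waff transl_in_Mlat hat_point_in_Ucal by blast
  then show "z \<in> Ucal (12 * N + 4)" using z by (auto simp: Ohat_sigmaA i w uminus_in_Ucal)
qed

lemma Ucal_subset_Union_Ohat_Bhat: "Ucal (12 * N + 4) \<subseteq> (\<Union>v\<in>Bhat N. Ohat v)"
proof
  fix z assume z_in: "z \<in> Ucal (12 * N + 4)"
  then obtain m n where z: "z = (of_int m, of_int n)"
    by (auto simp: Ucal_def elim!: Ints_cases)
  have real_norm: "(of_int m)\<^sup>2 + 3 * (of_int n)\<^sup>2 = 12 * real N + (4 :: real)"
    using z_in by (simp add: Ucal_def z)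
  then have "real_of_int (m\<^sup>2 + 3 * n\<^sup>2) = real_of_int (12 * int N + 4)" by simp
  then have "m\<^sup>2 + 3 * n\<^sup>2 = 12 * int N + 4" by (simp only: of_int_eq_iff)
  then obtain i u v where i: "i < 3" and mn: "(m, n) = pmap_int i u v \<or> (m, n) = - pmap_int i u v"
    using pmap_int_surj sum_squares_eq_12k_4 by blast
  define y :: vec3 where "y = (of_int u, of_int v, - of_int u - of_int v)"
  have "Mrot i (Mrot i y) \<in> Mlat" by (simp add: y_def of_int_in_Mlat Mrot_in_Mlat)
  then obtain w where w: "w \<in> Wup0" "transl w = Mrot i (Mrot i y)"
    using transl_Wup0_surj by blast
  have My: "Mrot i (transl w) = y" by (simp add: w(2) Mrot_Mrot_Mrot)
  have hp: "hat_point i (transl w) = map_prod of_int of_int (pmap_int i u v)"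
    using My by (simp add: y_def hat_point_eq_pmap_int)
  have z_eq: "z = map_prod of_int of_int (m, n)" by (simp add: z)
  have z_pm: "z = hat_point i (transl w) \<or> z = - hat_point i (transl w)"
    using mn
  proof (elim disjE)
    assume "(m, n) = pmap_int i u v"
    then show ?thesis by (simp add: z_eq hp)
  next
    assume "(m, n) = - pmap_int i u v"
    then show ?thesis by (simp add: z_eq hp map_prod_of_int_uminus)
  qed
  have "transl w \<in> V0"
    using Mlat_subset_V0 transl_in_Mlat[OF subsetD[OF Wup0_subset_Waff w(1)]] by blast
  then have "12 * atl_vec (omega i + Mrot i (transl w)) + 4 =
      (fst (hat_point i (transl w)))\<^sup>2 + 3 * (snd (hat_point i (transl w)))\<^sup>2"
    by (simp add: hat_point_norm)
  also have "\<dots> = (fst z)\<^sup>2 + 3 * (snd z)\<^sup>2" using z_pm by auto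
  also have "\<dots> = 12 * real N + 4" using real_norm by (simp add: z)
  finally have "atl_vec (omega i + Mrot i (transl w)) = real N" by simp
  then have "sigmaA i \<circ> w \<in> Bhat N" using i w(1) by (auto simp: Bhat_iff)
  moreover have "z \<in> Ohat (sigmaA i \<circ> w)" using z_pm by (simp add: Ohat_sigmaA i w(1))
  ultimately show "z \<in> (\<Union>v\<in>Bhat N. Ohat v)" by blast
qed

lemma disjoint_family_on_Ohat_Bhat: "disjoint_family_on Ohat (Bhat N)"
  unfolding disjoint_family_on_def
proof (intro ballI impI)
  fix v v' assume "v \<in> Bhat N" "v' \<in> Bhat N" and ne: "v \<noteq> v'"
  then obtain i w j w' where "i < 3" "w \<in> Wup0" "v = sigmaA i \<circ> w"
    and "j < 3" "w' \<in> Wup0" "v' = sigmaA j \<circ> w'"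
    unfolding Bhat_iff by blast
  then show "Ohat v \<inter> Ohat v' = {}" using Ohat_sigmaA_overlap ne by blast
qed

theorem theorem8p6:
  fixes N :: nat and w :: "hs \<Rightarrow> hs"
  assumes "w \<in> Wup0" and "atl w = real N"
  shows "Ocal w = (\<Union>i\<in>{0, 1, 2::nat}. Ohat (sigmaA i \<circ> w))
         \<and> disjoint_family_on (\<lambda>i. Ohat (sigmaA i \<circ> w)) {0, 1, 2::nat}
         \<and> Ucal (12 * N + 4) = (\<Union>v\<in>Bhat N. Ohat v)
         \<and> disjoint_family_on Ohat (Bhat N)"
proof (intro conjI)
  show "Ocal w = (\<Union>i\<in>{0, 1, 2::nat}. Ohat (sigmaA i \<circ> w))"
    using assms(1) by (rule Ocal_eq_Union_Ohat)
  show "disjoint_family_on (\<lambda>i. Ohat (sigmaA i \<circ> w)) {0, 1, 2::nat}"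
    using assms(1) by (rule disjoint_family_on_Ohat_sigmaA)
  show "Ucal (12 * N + 4) = (\<Union>v\<in>Bhat N. Ohat v)"
    using Ucal_subset_Union_Ohat_Bhat Union_Ohat_Bhat_subset by (rule equalityI)
  show "disjoint_family_on Ohat (Bhat N)"
    by (rule disjoint_family_on_Ohat_Bhat)
qed

end
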